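(* Let $C\subseteq[n]$ (viewed as a single column of boxes, one box in row $i$ for each $i\in C$) and let $r_C$ be the rank function of the Schubert matroid $SM_n(C)$. Then for every subset $S\subseteq[n]$, \[r_C(S)=\max\{|\mathcal{F}|\colon \mathcal{F}\in\mathcal{F}(C,S)\}.\]
   Context: For $T=\{a_1<\cdots<a_k\}$ and $S=\{b_1<\cdots<b_k\}$ subsets of $[n]$, $T\le S$ means $\#T=\#S$ and $a_i\le b_i$ for all $i$. $SM_n(C)$ is the matroid on $[n]$ with bases $\{T\subseteq[n]\colon T\le C\}$, and $r_C(A)=\max\{\#(A\cap B)\colon B\text{ a basis}\}$. A filling of $C$ is an assignment of positive integers to some (possibly none) of the boxes of $C$; unassigned boxes are empty, and $|\mathcal{F}|$ is the number of nonempty boxes. A filling is column-strict if the integers appearing are distinct, and flagged if each integer placed in the box of row $i$ is at most $i$. $\mathcal{F}(C,S)$ is the set of column-strict flagged fillings of $C$ all of whose entries lie in $S$. *)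

theory Defs
  imports Main
begin

definition gale_le :: "nat set \<Rightarrow> nat set \<Rightarrow> bool" where
  "gale_le T S \<longleftrightarrow> card T = card S \<and>
     (\<forall>i < card T. sorted_list_of_set T ! i \<le> sorted_list_of_set S ! i)"

definition schubert_bases :: "nat \<Rightarrow> nat set \<Rightarrow> nat set set" where
  "schubert_bases n C = {T. T \<subseteq> {1..n} \<and> gale_le T C}"

definition schubert_rank :: "nat \<Rightarrow> nat set \<Rightarrow> nat set \<Rightarrow> nat" where
  "schubert_rank n C A = Max ((\<lambda>B. card (A \<inter> B)) ` schubert_bases n C)"

text \<open>A filling of the single column C: a partial map from boxes (rows i \<in> C) to
positive integers; None = empty box. Column-strict flagged fillings with entries in S.\<close>
definition col_fillings :: "nat set \<Rightarrow> nat set \<Rightarrow> (nat \<Rightarrow> nat option) set" where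
  "col_fillings C S = {F. dom F \<subseteq> C
      \<and> (\<forall>i x. F i = Some x \<longrightarrow> 0 < x \<and> x \<le> i \<and> x \<in> S)
      \<and> inj_on F (dom F)}"

definition filling_size :: "(nat \<Rightarrow> nat option) \<Rightarrow> nat" where
  "filling_size F = card (dom F)"

end

theory Submission
  imports Defs
begin

text \<open>A set \<open>B\<close> lies below \<open>C\<close> in the Gale order iff there is a bijection \<open>\<psi> : C \<rightarrow> B\<close> with
  \<open>\<psi> c \<le> c\<close>. Such a \<open>\<psi>\<close>, restricted to the rows whose value lies in \<open>S\<close>, is a column-strict
  flagged filling of size \<open>#(S \<inter> B)\<close>. Conversely, a filling is a partial injection of this kind,
  and it extends greedily to a total one: going down the rows, a row keeps its entry if that is
  still unused and otherwise takes its own index, which exceeds every value used so far. The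
  basis obtained from the extension meets \<open>S\<close> in at least all entries of the filling.\<close>

lemma nth_sorted_list_of_set_le:
  fixes A :: "'a::linorder set"
  assumes "finite A" and "i < card {a\<in>A. a \<le> t}"
  shows "sorted_list_of_set A ! i \<le> t"
proof (rule ccontr)
  define xs where "xs = sorted_list_of_set A"
  have xs: "set xs = A" "sorted xs" using assms(1) by (simp_all add: xs_def)
  assume "\<not> xs ! i \<le> t"
  have "{a\<in>A. a \<le> t} \<subseteq> (!) xs ` {..<i}"
  proof
    fix a assume a: "a \<in> {a\<in>A. a \<le> t}"
    then obtain j where j: "j < length xs" "a = xs ! j"
      using xs(1) by (auto simp: in_set_conv_nth)
    have "j < i"
    proof (rule ccontr)
      assume "\<not> j < i"
      then have "xs ! i \<le> xs ! j" using j(1) xs(2) by (simp add: sorted_nth_mono)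
      then show False using \<open>\<not> xs ! i \<le> t\<close> a j(2) by auto
    qed
    then show "a \<in> (!) xs ` {..<i}" using j(2) by blast
  qed
  then have "card {a\<in>A. a \<le> t} \<le> card ((!) xs ` {..<i})" by (simp add: card_mono)
  also have "\<dots> \<le> i" using card_image_le[of "{..<i}" "(!) xs"] by simp
  finally show False using assms(2) by simp
qed

lemma card_le_nth_sorted_list_of_set:
  fixes A :: "'a::linorder set"
  assumes "finite A" and "i < card A"
  shows "Suc i \<le> card {a\<in>A. a \<le> sorted_list_of_set A ! i}"
proof -
  define xs where "xs = sorted_list_of_set A"
  have xs: "set xs = A" "sorted xs" "distinct xs" "length xs = card A"
    using assms(1) by (simp_all add: xs_def)
  have "Suc i = card ((!) xs ` {..i})"
    using assms(2) xs by (subst card_image) (simp_all add: inj_on_nth)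
  also have "\<dots> \<le> card {a\<in>A. a \<le> xs ! i}"
    using assms xs by (intro card_mono) (fastforce intro: sorted_nth_mono)+
  finally show ?thesis by (simp add: xs_def)
qed

lemma gale_le_iff_bij_betw_le:
  fixes B C :: "nat set"
  assumes "finite B" and "finite C"
  shows "gale_le B C \<longleftrightarrow> (\<exists>\<psi>. bij_betw \<psi> C B \<and> (\<forall>c\<in>C. \<psi> c \<le> c))"
proof
  define xs ys where "xs = sorted_list_of_set B" and "ys = sorted_list_of_set C"
  assume gale: "gale_le B C"
  then have card_eq: "card B = card C" by (simp add: gale_le_def)
  have xs: "bij_betw ((!) xs) {..<card C} B"
    using assms(1) card_eq by (intro bij_betw_nth) (simp_all add: xs_def)
  have ys: "bij_betw ((!) ys) {..<card C} C"
    using assms(2) by (intro bij_betw_nth) (simp_all add: ys_def)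
  define \<psi> where "\<psi> = (!) xs \<circ> inv_into {..<card C} ((!) ys)"
  have "bij_betw \<psi> C B"
    unfolding \<psi>_def using bij_betw_inv_into[OF ys] xs by (rule bij_betw_trans)
  moreover have "\<psi> c \<le> c" if "c \<in> C" for c
  proof -
    let ?i = "inv_into {..<card C} ((!) ys) c"
    have "?i < card C" "ys ! ?i = c"
      using bij_betw_inv_into_right[OF ys that] bij_betw_apply[OF bij_betw_inv_into[OF ys] that]
      by auto
    moreover have "xs ! ?i \<le> ys ! ?i"
      using gale card_eq \<open>?i < card C\<close> unfolding gale_le_def xs_def ys_def by simp
    ultimately show ?thesis by (simp add: \<psi>_def)
  qed
  ultimately show "\<exists>\<psi>. bij_betw \<psi> C B \<and> (\<forall>c\<in>C. \<psi> c \<le> c)" by blast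
next
  assume "\<exists>\<psi>. bij_betw \<psi> C B \<and> (\<forall>c\<in>C. \<psi> c \<le> c)"
  then obtain \<psi> where \<psi>: "bij_betw \<psi> C B" "\<forall>c\<in>C. \<psi> c \<le> c" by blast
  have card_eq: "card B = card C" using \<psi>(1) by (simp add: bij_betw_same_card)
  have "sorted_list_of_set B ! i \<le> sorted_list_of_set C ! i" if "i < card C" for i
  proof (rule nth_sorted_list_of_set_le[OF assms(1)])
    let ?t = "sorted_list_of_set C ! i"
    have "card {c\<in>C. c \<le> ?t} = card (\<psi> ` {c\<in>C. c \<le> ?t})"
      using inj_on_subset[OF bij_betw_imp_inj_on[OF \<psi>(1)]] by (simp add: card_image)
    also have "\<dots> \<le> card {b\<in>B. b \<le> ?t}"
    proof (rule card_mono)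
      show "\<psi> ` {c\<in>C. c \<le> ?t} \<subseteq> {b\<in>B. b \<le> ?t}"
        using \<psi>(2) bij_betw_apply[OF \<psi>(1)] by (fastforce dest: le_trans)
    qed (use assms(1) in simp)
    finally have "card {c\<in>C. c \<le> ?t} \<le> card {b\<in>B. b \<le> ?t}" .
    then show "i < card {b\<in>B. b \<le> ?t}"
      using card_le_nth_sorted_list_of_set[OF assms(2) that] by simp
  qed
  then show "gale_le B C" using card_eq by (simp add: gale_le_def)
qed

lemma flagged_injection_extends:
  fixes C :: "nat set" and F :: "nat \<Rightarrow> nat option"
  assumes "finite C" and "0 \<notin> C" and "dom F \<subseteq> C" and "inj_on F (dom F)"
    and "\<forall>i x. F i = Some x \<longrightarrow> 0 < x \<and> x \<le> i"
  shows "\<exists>\<psi>. inj_on \<psi> C \<and> (\<forall>c\<in>C. 0 < \<psi> c \<and> \<psi> c \<le> c) \<and> ran F \<subseteq> \<psi> ` C"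
  using assms
proof (induction C arbitrary: F rule: finite_linorder_max_induct)
  case empty
  then show ?case by (simp add: ran_def)
next
  case (insert m A)
  have "0 \<notin> A" "dom (F |` A) \<subseteq> A" "inj_on (F |` A) (dom (F |` A))"
      "\<forall>i x. (F |` A) i = Some x \<longrightarrow> 0 < x \<and> x \<le> i"
    using insert.prems by (auto simp: inj_on_def restrict_map_def dom_def)
  from insert.IH[OF this] obtain \<psi> where \<psi>: "inj_on \<psi> A" "\<forall>c\<in>A. 0 < \<psi> c \<and> \<psi> c \<le> c"
      "ran (F |` A) \<subseteq> \<psi> ` A"
    by blast
  have "m \<notin> A" using insert.hyps(2) by auto
  have ran_F: "ran F \<subseteq> \<psi> ` A \<union> {x. F m = Some x}"
  proof
    fix x assume "x \<in> ran F"
    then obtain a where a: "F a = Some x" by (auto simp: ran_def)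
    then have "a = m \<or> a \<in> A" using insert.prems(2) by auto
    then show "x \<in> \<psi> ` A \<union> {x. F m = Some x}"
      using a \<psi>(3) ranI[of "F |` A" a x] by auto
  qed
  have extend: "\<exists>\<psi>'. inj_on \<psi>' (insert m A) \<and> (\<forall>c\<in>insert m A. 0 < \<psi>' c \<and> \<psi>' c \<le> c)
      \<and> ran F \<subseteq> \<psi>' ` insert m A"
    if "y \<notin> \<psi> ` A" "0 < y" "y \<le> m" "ran F \<subseteq> \<psi> ` A \<union> {y}" for y
  proof -
    have "\<psi>(m := y) ` A = \<psi> ` A" using \<open>m \<notin> A\<close> by auto
    moreover have "inj_on (\<psi>(m := y)) A" using \<psi>(1) \<open>m \<notin> A\<close> by (simp add: inj_on_def)
    ultimately show ?thesis using that \<psi>(2) \<open>m \<notin> A\<close> by (intro exI[of _ "\<psi>(m := y)"]) auto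
  qed
  show ?case
  proof (cases "\<exists>x. F m = Some x \<and> x \<notin> \<psi> ` A")
    case True
    then obtain x where "F m = Some x" "x \<notin> \<psi> ` A" by blast
    show ?thesis
      by (rule extend[of x]) (use \<open>F m = Some x\<close> \<open>x \<notin> \<psi> ` A\<close> insert.prems(4) ran_F in auto)
  next
    case False
    have "m \<notin> \<psi> ` A" using \<psi>(2) insert.hyps(2) by fastforce
    show ?thesis
      by (rule extend[of m]) (use \<open>m \<notin> \<psi> ` A\<close> insert.prems(1) ran_F False in auto)
  qed
qed

lemma card_ran_eq_card_dom:
  assumes "inj_on m (dom m)"
  shows "card (ran m) = card (dom m)"
proof -
  have "ran m = (the \<circ> m) ` dom m" by (force simp: ran_def dom_def)
  moreover have "inj_on (the \<circ> m) (dom m)" using assms by (auto simp: inj_on_def dom_def)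
  ultimately show ?thesis by (metis card_image)
qed

lemma finite_schubert_bases: "finite (schubert_bases n C)"
  unfolding schubert_bases_def by (rule finite_subset[of _ "Pow {1..n}"]) auto

lemma filling_size_le_card: "F \<in> col_fillings C S \<Longrightarrow> finite C \<Longrightarrow> filling_size F \<le> card C"
  by (auto simp: col_fillings_def filling_size_def intro: card_mono)

lemma col_filling_of_schubert_basis:
  assumes "B \<in> schubert_bases n C" and "finite C"
  shows "\<exists>F\<in>col_fillings C S. filling_size F = card (S \<inter> B)"
proof -
  have B: "B \<subseteq> {1..n}" "gale_le B C" using assms(1) by (simp_all add: schubert_bases_def)
  have "finite B" using B(1) by (rule finite_subset) simp
  with assms(2) B(2) obtain \<psi> where \<psi>: "bij_betw \<psi> C B" "\<forall>c\<in>C. \<psi> c \<le> c"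
    using gale_le_iff_bij_betw_le by blast
  have inj: "inj_on \<psi> C" using \<psi>(1) by (rule bij_betw_imp_inj_on)
  define F where "F c = (if c \<in> C \<and> \<psi> c \<in> S then Some (\<psi> c) else None)" for c
  have dom_F: "dom F = {c\<in>C. \<psi> c \<in> S}" by (auto simp: F_def dom_def)
  have "F \<in> col_fillings C S"
    unfolding col_fillings_def
  proof (intro CollectI conjI allI impI)
    show "dom F \<subseteq> C" using dom_F by auto
    show "inj_on F (dom F)" using inj unfolding dom_F inj_on_def F_def by auto
    fix i x assume "F i = Some x"
    then have "i \<in> C" "x = \<psi> i" "x \<in> S" by (auto simp: F_def split: if_splits)
    moreover have "\<psi> i \<in> B" using bij_betw_apply[OF \<psi>(1) \<open>i \<in> C\<close>] .
    ultimately show "0 < x" "x \<le> i" "x \<in> S" using \<psi>(2) B(1) by auto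
  qed
  moreover have "filling_size F = card (\<psi> ` dom F)"
    using inj_on_subset[OF inj] dom_F by (simp add: filling_size_def card_image)
  moreover have "\<psi> ` dom F = S \<inter> B" using \<psi>(1) by (auto simp: dom_F bij_betw_def)
  ultimately show ?thesis by auto
qed

lemma schubert_basis_of_col_filling:
  assumes "F \<in> col_fillings C S" and "C \<subseteq> {1..n}"
  shows "\<exists>B\<in>schubert_bases n C. filling_size F \<le> card (S \<inter> B)"
proof -
  have "finite C" using assms(2) by (rule finite_subset) simp
  have "0 \<notin> C" using assms(2) by auto
  have F: "dom F \<subseteq> C" "inj_on F (dom F)" "\<forall>i x. F i = Some x \<longrightarrow> 0 < x \<and> x \<le> i"
    using assms(1) by (simp_all add: col_fillings_def)
  from flagged_injection_extends[OF \<open>finite C\<close> \<open>0 \<notin> C\<close> F] obtain \<psi>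
    where \<psi>: "inj_on \<psi> C" "\<forall>c\<in>C. 0 < \<psi> c \<and> \<psi> c \<le> c" "ran F \<subseteq> \<psi> ` C"
    by blast
  let ?B = "\<psi> ` C"
  have "bij_betw \<psi> C ?B" using \<psi>(1) by (rule inj_on_imp_bij_betw)
  then have "gale_le ?B C"
    using gale_le_iff_bij_betw_le[of ?B C] \<open>finite C\<close> \<psi>(2) by blast
  moreover have "?B \<subseteq> {1..n}"
  proof (rule image_subsetI)
    fix c assume "c \<in> C"
    then have "0 < \<psi> c" "\<psi> c \<le> c" "c \<le> n" using \<psi>(2) assms(2) by auto
    then show "\<psi> c \<in> {1..n}" by simp
  qed
  ultimately have B: "?B \<in> schubert_bases n C" by (simp add: schubert_bases_def)
  have "filling_size F = card (ran F)"
    using assms(1) by (simp add: col_fillings_def filling_size_def card_ran_eq_card_dom)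
  also have "\<dots> \<le> card (S \<inter> ?B)"
    using assms(1) \<psi>(3) \<open>finite C\<close> by (intro card_mono) (auto simp: col_fillings_def ran_def)
  finally show ?thesis using B by blast
qed

theorem theorem3p4:
  fixes n :: nat and C S :: "nat set"
  assumes "C \<subseteq> {1..n}" and "S \<subseteq> {1..n}"
  shows "schubert_rank n C S = Max (filling_size ` col_fillings C S)"
  unfolding schubert_rank_def
proof (rule Max_eq_if)
  have "finite C" using assms(1) by (rule finite_subset) simp
  show "finite ((\<lambda>B. card (S \<inter> B)) ` schubert_bases n C)"
    by (simp add: finite_schubert_bases)
  have "filling_size ` col_fillings C S \<subseteq> {..card C}"
    using filling_size_le_card \<open>finite C\<close> by auto
  then show "finite (filling_size ` col_fillings C S)" by (rule finite_subset) simp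
  show "\<forall>r\<in>(\<lambda>B. card (S \<inter> B)) ` schubert_bases n C. \<exists>s\<in>filling_size ` col_fillings C S. r \<le> s"
  proof (rule ballI, elim imageE)
    fix r B assume "r = card (S \<inter> B)" "B \<in> schubert_bases n C"
    with col_filling_of_schubert_basis[OF _ \<open>finite C\<close>] obtain F
      where "F \<in> col_fillings C S" "filling_size F = r" by blast
    then show "\<exists>s\<in>filling_size ` col_fillings C S. r \<le> s" by force
  qed
  show "\<forall>s\<in>filling_size ` col_fillings C S. \<exists>r\<in>(\<lambda>B. card (S \<inter> B)) ` schubert_bases n C. s \<le> r"
  proof (rule ballI, elim imageE)
    fix s F assume "s = filling_size F" "F \<in> col_fillings C S"
    with schubert_basis_of_col_filling[OF _ assms(1)] obtain B
      where "B \<in> schubert_bases n C" "s \<le> card (S \<inter> B)" by blast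
    then show "\<exists>r\<in>(\<lambda>B. card (S \<inter> B)) ` schubert_bases n C. s \<le> r" by force
  qed
qed

end
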